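(* Let $A$ be a finite set and let $X \subset A^{\mathbb Z}$ be a strongly irreducible subshift. Then $X$ is surjunctive and its automorphism group $\mathrm{Aut}(X)$ is residually finite. Moreover, $X$ admits a shift-invariant Borel probability measure with full support.
   Context: $A^{\mathbb Z}$ carries the product topology of discrete topologies and the shift action $(gx)(h)=x(h-g)$. A subshift is a closed shift-invariant subset. $X$ is strongly irreducible if there is a finite $\Delta\subset\mathbb Z$ such that for all finite $\Omega_1,\Omega_2\subset\mathbb Z$ with $(\Omega_1-\Delta)\cap\Omega_2=\varnothing$ and all $x_1,x_2\in X$ there is $x\in X$ with $x|_{\Omega_1}=x_1|_{\Omega_1}$ and $x|_{\Omega_2}=x_2|_{\Omega_2}$. A cellular automaton on $X$ is a continuous shift-equivariant map $X\to X$; $X$ is surjunctive if every injective cellular automaton $X\to X$ is surjective; $\mathrm{Aut}(X)$ is the group of bijective cellular automata $X\to X$ under composition. A group is residually finite if the intersection of its finite-index subgroups is trivial. *)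

theory Defs
  imports "HOL-Probability.Probability" "HOL-Algebra.Coset"
begin

definition fullshift_top :: "'a set \<Rightarrow> (int \<Rightarrow> 'a) topology" where
  "fullshift_top A = product_topology (\<lambda>_::int. discrete_topology A) UNIV"

definition zshift :: "int \<Rightarrow> (int \<Rightarrow> 'a) \<Rightarrow> (int \<Rightarrow> 'a)" where
  "zshift g x = (\<lambda>h. x (h - g))"

definition subshift :: "'a set \<Rightarrow> (int \<Rightarrow> 'a) set \<Rightarrow> bool" where
  "subshift A X \<longleftrightarrow> closedin (fullshift_top A) X \<and> (\<forall>g. \<forall>x\<in>X. zshift g x \<in> X)"

definition strongly_irreducible :: "(int \<Rightarrow> 'a) set \<Rightarrow> bool" where
  "strongly_irreducible X \<longleftrightarrow>
     (\<exists>\<Delta>::int set. finite \<Delta> \<and>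
       (\<forall>\<Omega>1 \<Omega>2::int set. finite \<Omega>1 \<longrightarrow> finite \<Omega>2 \<longrightarrow>
          {a - d |a d. a \<in> \<Omega>1 \<and> d \<in> \<Delta>} \<inter> \<Omega>2 = {} \<longrightarrow>
          (\<forall>x1\<in>X. \<forall>x2\<in>X. \<exists>x\<in>X. (\<forall>h\<in>\<Omega>1. x h = x1 h) \<and> (\<forall>h\<in>\<Omega>2. x h = x2 h))))"

definition cellular_automaton :: "'a set \<Rightarrow> (int \<Rightarrow> 'a) set \<Rightarrow> ((int \<Rightarrow> 'a) \<Rightarrow> (int \<Rightarrow> 'a)) \<Rightarrow> bool" where
  "cellular_automaton A X \<tau> \<longleftrightarrow>
     \<tau> \<in> extensional X \<and>
     continuous_map (subtopology (fullshift_top A) X) (subtopology (fullshift_top A) X) \<tau> \<and>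
     (\<forall>g. \<forall>x\<in>X. \<tau> (zshift g x) = zshift g (\<tau> x))"

definition surjunctive :: "'a set \<Rightarrow> (int \<Rightarrow> 'a) set \<Rightarrow> bool" where
  "surjunctive A X \<longleftrightarrow>
     (\<forall>\<tau>. cellular_automaton A X \<tau> \<longrightarrow> inj_on \<tau> X \<longrightarrow> \<tau> ` X = X)"

definition Aut :: "'a set \<Rightarrow> (int \<Rightarrow> 'a) set \<Rightarrow> ((int \<Rightarrow> 'a) \<Rightarrow> (int \<Rightarrow> 'a)) monoid" where
  "Aut A X = \<lparr> carrier = {\<tau>. cellular_automaton A X \<tau> \<and> bij_betw \<tau> X X},
              mult = (\<lambda>\<sigma> \<tau>. \<lambda>x\<in>X. \<sigma> (\<tau> x)),
              one = (\<lambda>x\<in>X. x) \<rparr>"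

definition residually_finite :: "('g, 'b) monoid_scheme \<Rightarrow> bool" where
  "residually_finite G \<longleftrightarrow>
     (\<forall>g\<in>carrier G. g \<noteq> \<one>\<^bsub>G\<^esub> \<longrightarrow>
        (\<exists>H. subgroup H G \<and> finite (rcosets\<^bsub>G\<^esub> H) \<and> g \<notin> H))"

definition borel_sets_of :: "'a set \<Rightarrow> (int \<Rightarrow> 'a) set \<Rightarrow> (int \<Rightarrow> 'a) set set" where
  "borel_sets_of A X = sigma_sets X {U. openin (subtopology (fullshift_top A) X) U}"

end

theory Submission
  imports Defs
begin

text \<open>
  Strong irreducibility gives the specification property: any two words of the language can be
  glued by a gap word of one fixed length. Among all pairs of words, one with the fewest
  admissible gaps yields a synchronizing word, and with it arbitrarily long words all of whose
  powers lie in the language; hence periodic points are dense. Everything else follows from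
  density of the finite, CA-invariant sets of \<open>q\<close>-periodic points: an injective cellular
  automaton permutes each of them and has closed image; a nontrivial automorphism moves some
  periodic point, while the pointwise stabiliser of the \<open>q\<close>-periodic points has finite index;
  and a geometric mixture of the uniform distributions on \<open>q\<close>-periodic points is a
  shift-invariant measure charging every nonempty open set.
\<close>

definition agree_on_window :: "nat \<Rightarrow> (int \<Rightarrow> 'a) \<Rightarrow> (int \<Rightarrow> 'a) \<Rightarrow> bool" where
  "agree_on_window n x y \<longleftrightarrow> (\<forall>i. \<bar>i\<bar> \<le> int n \<longrightarrow> x i = y i)"

definition periodic_points :: "(int \<Rightarrow> 'a) set \<Rightarrow> int \<Rightarrow> (int \<Rightarrow> 'a) set" where
  "periodic_points X q = {x \<in> X. zshift q x = x}"

definition periodic_points_dense :: "(int \<Rightarrow> 'a) set \<Rightarrow> bool" where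
  "periodic_points_dense X \<longleftrightarrow>
     (\<forall>x\<in>X. \<forall>n. \<exists>q>0. \<exists>y\<in>periodic_points X q. agree_on_window n y x)"

section \<open>The full shift\<close>

lemma topspace_fullshift_top: "topspace (fullshift_top A) = {x. \<forall>i. x i \<in> A}"
  by (auto simp: fullshift_top_def PiE_def extensional_def)

lemma Hausdorff_space_fullshift_top: "Hausdorff_space (fullshift_top A)"
  unfolding fullshift_top_def by (simp add: Hausdorff_space_product_topology)

lemma compact_space_fullshift_top: "finite A \<Longrightarrow> compact_space (fullshift_top A)"
  unfolding fullshift_top_def
  by (simp add: compact_space_product_topology compact_space_discrete_topology)

lemma openin_fullshift_top_window:
  assumes "openin (fullshift_top A) V" "x \<in> V"
  obtains n where "\<And>z. z \<in> topspace (fullshift_top A) \<Longrightarrow> agree_on_window n z x \<Longrightarrow> z \<in> V"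
proof -
  obtain U where U: "finite {i. U i \<noteq> A}" "x \<in> Pi\<^sub>E UNIV U" "Pi\<^sub>E UNIV U \<subseteq> V"
    using assms unfolding fullshift_top_def openin_product_topology_alt by force
  define n where "n = Max (insert 0 ((\<lambda>i. nat \<bar>i\<bar>) ` {i. U i \<noteq> A}))"
  have window: "\<bar>i\<bar> \<le> int n" if "U i \<noteq> A" for i
  proof -
    have "nat \<bar>i\<bar> \<le> n" unfolding n_def using U(1) that by (intro Max_ge) auto
    then show ?thesis by simp
  qed
  show ?thesis
  proof (rule that)
    fix z assume z: "z \<in> topspace (fullshift_top A)" and agree: "agree_on_window n z x"
    have "z i \<in> U i" for i
      using z agree window[of i] U(2) by (cases "U i = A") (auto simp: topspace_fullshift_top agree_on_window_def)
    then show "z \<in> V" using U(3) by blast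
  qed
qed

lemma closedin_fullshift_top_window:
  assumes "closedin (fullshift_top A) C" "y \<in> topspace (fullshift_top A)"
    and "\<And>n. \<exists>c\<in>C. agree_on_window n c y"
  shows "y \<in> C"
proof (rule ccontr)
  assume "y \<notin> C"
  then obtain n where n: "\<And>z. z \<in> topspace (fullshift_top A) \<Longrightarrow> agree_on_window n z y \<Longrightarrow>
      z \<in> topspace (fullshift_top A) - C"
    using openin_fullshift_top_window[of A "topspace (fullshift_top A) - C" y] assms(1,2) by blast
  obtain c where "c \<in> C" "agree_on_window n c y" using assms(3) by blast
  then show False using n closedin_subset[OF assms(1)] by blast
qed

lemma continuous_map_zshift: "continuous_map (fullshift_top A) (fullshift_top A) (zshift g)"
  unfolding fullshift_top_def continuous_map_componentwise_UNIV zshift_def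
  by (auto intro: continuous_map_product_projection)

lemma zshift_zshift: "zshift a (zshift b x) = zshift (a + b) x"
  by (simp add: zshift_def algebra_simps)

lemma zshift_0: "zshift 0 x = x"
  by (simp add: zshift_def)

lemma zshift_periodic: "zshift q x = x \<Longrightarrow> zshift q (zshift g x) = zshift g x"
  by (metis zshift_zshift add.commute)

lemma inj_zshift: "inj (zshift g)"
  by (rule inj_on_inverseI[where g = "zshift (- g)"]) (simp add: zshift_def)

lemma periodic_add_multiple:
  assumes "zshift q x = x"
  shows "x (h + k * q) = x h"
proof -
  have step: "x (h + q) = x h" for h
    using fun_cong[OF assms, of "h + q"] by (simp add: zshift_def)
  have nat_multiple: "x (h + int m * q) = x h" for h m
  proof (induction m arbitrary: h)
    case (Suc m)
    have "x (h + int (Suc m) * q) = x ((h + q) + int m * q)" by (simp add: algebra_simps)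
    also have "\<dots> = x h" using Suc.IH step by simp
    finally show ?case .
  qed simp
  show ?thesis
  proof (cases "k \<ge> 0")
    case True
    then show ?thesis using nat_multiple[of h "nat k"] by simp
  next
    case False
    then show ?thesis using nat_multiple[of "h + k * q" "nat (- k)"] by (simp add: algebra_simps)
  qed
qed

lemma periodic_mod: "zshift q x = x \<Longrightarrow> x h = x (h mod q)"
  using periodic_add_multiple[of q x h "- (h div q)"] by (simp add: minus_div_mult_eq_mod[symmetric])

lemma zshift_multiple_periodic:
  assumes "zshift q x = x"
  shows "zshift (k * q) x = x"
proof
  fix h
  show "zshift (k * q) x h = x h"
    using periodic_add_multiple[OF assms, of "h - k * q" k] by (simp add: zshift_def)
qed

section \<open>Words\<close>

definition occurs_at :: "(int \<Rightarrow> 'a) \<Rightarrow> int \<Rightarrow> 'a list \<Rightarrow> bool" where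
  "occurs_at x a w \<longleftrightarrow> (\<forall>i<length w. x (a + int i) = w ! i)"

definition in_language :: "(int \<Rightarrow> 'a) set \<Rightarrow> 'a list \<Rightarrow> bool" where
  "in_language X w \<longleftrightarrow> (\<exists>x\<in>X. occurs_at x 0 w)"

lemma occurs_at_zshift: "occurs_at x a w \<Longrightarrow> occurs_at (zshift g x) (a + g) w"
  by (auto simp: occurs_at_def zshift_def algebra_simps)

lemma occurs_at_append:
  "occurs_at x a (u @ v) \<longleftrightarrow> occurs_at x a u \<and> occurs_at x (a + int (length u)) v"
proof -
  have "(\<forall>i<length (u @ v). P i) \<longleftrightarrow> (\<forall>i<length u. P i) \<and> (\<forall>j<length v. P (length u + j))"
    for P :: "nat \<Rightarrow> bool"
    by (auto, metis add_diff_inverse_nat add_less_cancel_left)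
  then show ?thesis unfolding occurs_at_def by (simp add: nth_append add.assoc)
qed

lemma occurs_at_agree:
  assumes "occurs_at x a w" "occurs_at y a w" "a \<le> i" "i < a + int (length w)"
  shows "x i = y i"
proof -
  have "nat (i - a) < length w" "a + int (nat (i - a)) = i" using assms(3,4) by auto
  then show ?thesis using assms(1,2) unfolding occurs_at_def by metis
qed

definition cyclic_config :: "'a list \<Rightarrow> int \<Rightarrow> 'a" where
  "cyclic_config B i = B ! nat (i mod int (length B))"

lemma zshift_cyclic_config: "zshift (int (length B)) (cyclic_config B) = cyclic_config B"
  by (simp add: zshift_def cyclic_config_def fun_eq_iff mod_diff_right_eq[symmetric])

lemma occurs_at_cyclic_config:
  assumes "B \<noteq> []"
  shows "occurs_at (cyclic_config B) (k * int (length B)) (concat (replicate m B))"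
proof (induction m arbitrary: k)
  case (Suc m)
  have "occurs_at (cyclic_config B) (k * int (length B)) B"
    using assms by (simp add: occurs_at_def cyclic_config_def zmod_int)
  moreover have "occurs_at (cyclic_config B) (k * int (length B) + int (length B)) (concat (replicate m B))"
    using Suc.IH[of "k + 1"] by (simp add: algebra_simps)
  ultimately show ?case by (simp add: occurs_at_append)
qed (simp add: occurs_at_def)

section \<open>Subshifts over a finite alphabet\<close>

locale finite_subshift =
  fixes A :: "'a set" and X :: "(int \<Rightarrow> 'a) set"
  assumes finite_alphabet: "finite A" and subshift: "subshift A X"
begin

abbreviation XT :: "(int \<Rightarrow> 'a) topology" where
  "XT \<equiv> subtopology (fullshift_top A) X"

lemma closedin_X: "closedin (fullshift_top A) X"
  using subshift by (simp add: subshift_def)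

lemma zshift_in_X: "x \<in> X \<Longrightarrow> zshift g x \<in> X"
  using subshift by (simp add: subshift_def)

lemma X_subset_topspace: "X \<subseteq> topspace (fullshift_top A)"
  using closedin_subset[OF closedin_X] .

lemma topspace_XT: "topspace XT = X"
  using X_subset_topspace by auto

lemma values_in_alphabet: "x \<in> X \<Longrightarrow> x i \<in> A"
  using X_subset_topspace topspace_fullshift_top by blast

lemma compactin_X: "compactin (fullshift_top A) X"
  using closedin_compact_space[OF compact_space_fullshift_top[OF finite_alphabet] closedin_X] .

lemma continuous_map_zshift_XT: "continuous_map XT XT (zshift g)"
  using continuous_map_from_subtopology[OF continuous_map_zshift]
  by (rule continuous_map_into_subtopology) (use zshift_in_X topspace_XT in auto)

lemma in_language_if_occurs: "x \<in> X \<Longrightarrow> occurs_at x a w \<Longrightarrow> in_language X w"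
  unfolding in_language_def using occurs_at_zshift[of x a w "- a"] zshift_in_X by force

lemma in_language_infix: "in_language X (u @ w @ v) \<Longrightarrow> in_language X w"
  unfolding in_language_def by (metis occurs_at_append in_language_if_occurs in_language_def)

lemma in_language_prefix: "in_language X (u @ v) \<Longrightarrow> in_language X u"
  using in_language_infix[of "[]" u v] by simp

lemma in_language_suffix: "in_language X (u @ v) \<Longrightarrow> in_language X v"
  using in_language_infix[of u v "[]"] by simp

lemma in_language_set: "in_language X w \<Longrightarrow> set w \<subseteq> A"
  by (auto simp: in_language_def occurs_at_def in_set_conv_nth) (metis values_in_alphabet)

lemma cyclic_config_in_X:
  assumes "B \<noteq> []" and powers: "\<And>k. in_language X (concat (replicate k B))"
  shows "cyclic_config B \<in> X"
proof (rule closedin_fullshift_top_window[OF closedin_X])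
  have "set B \<subseteq> A" using in_language_set[OF powers[of 1]] by simp
  then show "cyclic_config B \<in> topspace (fullshift_top A)"
    using assms(1) by (auto simp: topspace_fullshift_top cyclic_config_def nat_less_iff)
  fix n
  define w where "w = concat (replicate (2 * (n + 1)) B)"
  define J where "J = int (n + 1) * int (length B)"
  obtain x where x: "x \<in> X" "occurs_at x 0 w"
    using powers unfolding in_language_def w_def by blast
  have "occurs_at (zshift (- J) x) (- J) w"
    using occurs_at_zshift[OF x(2)] by simp
  moreover have "occurs_at (cyclic_config B) (- J) w"
    using occurs_at_cyclic_config[OF assms(1), of "- int (n + 1)" "2 * (n + 1)"]
    unfolding w_def J_def minus_mult_left .
  moreover have "int (n + 1) * 1 \<le> J"
    unfolding J_def using assms(1) by (intro mult_left_mono) (auto simp: Suc_le_eq)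
  moreover have "int (length w) = 2 * J"
    by (simp add: w_def J_def length_concat sum_list_replicate algebra_simps)
  ultimately have "agree_on_window n (zshift (- J) x) (cyclic_config B)"
    unfolding agree_on_window_def by (intro allI impI occurs_at_agree) auto
  then show "\<exists>c\<in>X. agree_on_window n c (cyclic_config B)"
    using zshift_in_X[OF x(1)] by blast
qed

lemma periodic_points_subset: "periodic_points X q \<subseteq> X"
  by (auto simp: periodic_points_def)

lemma finite_periodic_points:
  assumes "q > 0"
  shows "finite (periodic_points X q)"
proof -
  define f where "f x = map (\<lambda>i. x (int i)) [0..<nat q]" for x :: "int \<Rightarrow> 'a"
  have "f ` periodic_points X q \<subseteq> {w. set w \<subseteq> A \<and> length w = nat q}"
    unfolding f_def periodic_points_def using values_in_alphabet by auto
  then have "finite (f ` periodic_points X q)"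
    using finite_lists_length_eq[OF finite_alphabet] finite_subset by blast
  moreover have "inj_on f (periodic_points X q)"
  proof (rule inj_onI)
    fix x y assume xy: "x \<in> periodic_points X q" "y \<in> periodic_points X q" "f x = f y"
    show "x = y"
    proof
      fix h
      have "0 \<le> h mod q" "h mod q < q" using assms by auto
      then have "x (h mod q) = y (h mod q)"
        using arg_cong[OF xy(3), of "\<lambda>w. w ! nat (h mod q)"] by (simp add: f_def)
      then show "x h = y h"
        using periodic_mod[of q x h] periodic_mod[of q y h] xy(1,2) by (simp add: periodic_points_def)
    qed
  qed
  ultimately show ?thesis using finite_imageD by blast
qed

lemma zshift_periodic_points: "zshift g ` periodic_points X q = periodic_points X q"
proof -
  have into: "zshift g x \<in> periodic_points X q" if "x \<in> periodic_points X q" for g x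
    using that by (auto simp: periodic_points_def zshift_in_X zshift_periodic)
  have "x = zshift g (zshift (- g) x)" for x :: "int \<Rightarrow> 'a"
    by (simp add: zshift_zshift zshift_0)
  then show ?thesis using into by blast
qed

lemma cellular_automaton_in_X: "cellular_automaton A X \<tau> \<Longrightarrow> x \<in> X \<Longrightarrow> \<tau> x \<in> X"
  unfolding cellular_automaton_def
  using continuous_map_image_subset_topspace topspace_XT by blast

lemma cellular_automaton_periodic_points:
  assumes "cellular_automaton A X \<tau>" "x \<in> periodic_points X q"
  shows "\<tau> x \<in> periodic_points X q"
proof -
  have "x \<in> X" "zshift q x = x" using assms(2) by (auto simp: periodic_points_def)
  then have "zshift q (\<tau> x) = \<tau> x" using assms(1) unfolding cellular_automaton_def by metis
  then show ?thesis using cellular_automaton_in_X[OF assms(1) \<open>x \<in> X\<close>] by (simp add: periodic_points_def)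
qed

lemma cellular_automaton_window:
  assumes "cellular_automaton A X \<tau>" "x \<in> X"
  obtains n where "\<And>z. z \<in> X \<Longrightarrow> agree_on_window n z x \<Longrightarrow> \<tau> z j = \<tau> x j"
proof -
  have "\<tau> x j \<in> A" using values_in_alphabet cellular_automaton_in_X assms by blast
  then have "openin (fullshift_top A) {w \<in> topspace (fullshift_top A). w j \<in> {\<tau> x j}}"
    unfolding fullshift_top_def
    by (intro openin_continuous_map_preimage[OF continuous_map_product_projection]) auto
  then have "openin XT (X \<inter> {w \<in> topspace (fullshift_top A). w j \<in> {\<tau> x j}})"
    by (rule openin_subtopology_Int2)
  then have "openin XT {z \<in> topspace XT. \<tau> z \<in> X \<inter> {w \<in> topspace (fullshift_top A). w j \<in> {\<tau> x j}}}"
    using assms(1) unfolding cellular_automaton_def by (blast intro: openin_continuous_map_preimage)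
  then obtain V where V: "openin (fullshift_top A) V"
      "{z \<in> topspace XT. \<tau> z \<in> X \<inter> {w \<in> topspace (fullshift_top A). w j \<in> {\<tau> x j}}} = V \<inter> X"
    unfolding openin_subtopology by blast
  have "x \<in> V"
    using V(2) assms cellular_automaton_in_X X_subset_topspace topspace_XT by blast
  then obtain n where "\<And>z. z \<in> topspace (fullshift_top A) \<Longrightarrow> agree_on_window n z x \<Longrightarrow> z \<in> V"
    using openin_fullshift_top_window[OF V(1)] by blast
  then show ?thesis using that V(2) X_subset_topspace topspace_XT by blast
qed

theorem surjunctive_if_periodic_points_dense:
  assumes "periodic_points_dense X"
  shows "surjunctive A X"
  unfolding surjunctive_def
proof (intro allI impI)
  fix \<tau> assume ca: "cellular_automaton A X \<tau>" and inj: "inj_on \<tau> X"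
  have "compactin XT (\<tau> ` X)"
    using ca compactin_X unfolding cellular_automaton_def
    by (metis compactin_subtopology image_compactin subset_refl)
  then have closed: "closedin (fullshift_top A) (\<tau> ` X)"
    using compactin_imp_closedin Hausdorff_space_fullshift_top compactin_subtopology by blast
  have periodic_in_image: "y \<in> \<tau> ` X" if "y \<in> periodic_points X q" "q > 0" for y q
  proof -
    have "\<tau> ` periodic_points X q = periodic_points X q"
      using finite_periodic_points[OF that(2)] cellular_automaton_periodic_points[OF ca]
        inj_on_subset[OF inj periodic_points_subset]
      by (intro endo_inj_surj) auto
    then show ?thesis using that(1) periodic_points_subset by blast
  qed
  have "X \<subseteq> \<tau> ` X"
  proof
    fix x assume "x \<in> X"
    then show "x \<in> \<tau> ` X"
      using assms periodic_in_image X_subset_topspace unfolding periodic_points_dense_def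
      by (intro closedin_fullshift_top_window[OF closed]) blast+
  qed
  then show "\<tau> ` X = X" using cellular_automaton_in_X[OF ca] by blast
qed

subsection \<open>The automorphism group\<close>

lemma Aut_carrier: "carrier (Aut A X) = {\<tau>. cellular_automaton A X \<tau> \<and> bij_betw \<tau> X X}"
  by (simp add: Aut_def)

lemma Aut_mult_apply: "z \<in> X \<Longrightarrow> (\<sigma> \<otimes>\<^bsub>Aut A X\<^esub> \<tau>) z = \<sigma> (\<tau> z)"
  by (simp add: Aut_def)

lemma Aut_one_apply: "z \<in> X \<Longrightarrow> \<one>\<^bsub>Aut A X\<^esub> z = z"
  by (simp add: Aut_def)

lemma cellular_automaton_compose:
  assumes "cellular_automaton A X \<sigma>" "cellular_automaton A X \<tau>"
  shows "cellular_automaton A X (\<lambda>x\<in>X. \<sigma> (\<tau> x))"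
  unfolding cellular_automaton_def
proof (intro conjI allI ballI)
  have "continuous_map XT XT (\<sigma> \<circ> \<tau>)"
    using assms continuous_map_compose unfolding cellular_automaton_def by blast
  then show "continuous_map XT XT (\<lambda>x\<in>X. \<sigma> (\<tau> x))"
    by (rule continuous_map_eq) (simp add: topspace_XT)
  show "\<And>g x. x \<in> X \<Longrightarrow> (\<lambda>x\<in>X. \<sigma> (\<tau> x)) (zshift g x) = zshift g ((\<lambda>x\<in>X. \<sigma> (\<tau> x)) x)"
    using assms cellular_automaton_in_X zshift_in_X unfolding cellular_automaton_def by simp
qed simp

lemma cellular_automaton_identity: "cellular_automaton A X (\<lambda>x\<in>X. x)"
  unfolding cellular_automaton_def
  by (auto simp: zshift_in_X topspace_XT intro: continuous_map_eq[OF continuous_map_id])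

lemma cellular_automaton_inverse:
  assumes ca: "cellular_automaton A X \<sigma>" and bij: "bij_betw \<sigma> X X"
  shows "cellular_automaton A X (\<lambda>x\<in>X. inv_into X \<sigma> x)"
  unfolding cellular_automaton_def
proof (intro conjI allI ballI)
  have inj: "inj_on \<sigma> X" and onto: "\<sigma> ` X = X" using bij by (auto simp: bij_betw_def)
  have "continuous_map XT XT \<sigma>" using ca by (simp add: cellular_automaton_def)
  then have "homeomorphic_map XT XT \<sigma>"
    by (rule continuous_imp_homeomorphic_map)
      (use compact_space_subtopology[OF compactin_X]
        Hausdorff_space_subtopology[OF Hausdorff_space_fullshift_top] inj onto topspace_XT in auto)
  then obtain \<rho> where "homeomorphic_maps XT XT \<sigma> \<rho>" using homeomorphic_map_maps by blast
  then have \<rho>: "continuous_map XT XT \<rho>" "\<And>y. y \<in> X \<Longrightarrow> \<sigma> (\<rho> y) = y"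
    unfolding homeomorphic_maps_def topspace_XT by auto
  have \<rho>_in_X: "\<rho> y \<in> X" if "y \<in> X" for y
    using continuous_map_image_subset_topspace[OF \<rho>(1)] that topspace_XT by blast
  show "continuous_map XT XT (\<lambda>x\<in>X. inv_into X \<sigma> x)"
  proof (rule continuous_map_eq[OF \<rho>(1)])
    fix y assume "y \<in> topspace XT"
    then have y: "y \<in> X" using topspace_XT by blast
    then show "\<rho> y = (\<lambda>x\<in>X. inv_into X \<sigma> x) y"
      using y inj \<rho>_in_X[OF y] \<rho>(2)[OF y] by (metis inv_into_f_eq restrict_apply')
  qed
  fix g x assume x: "x \<in> X"
  define y where "y = inv_into X \<sigma> x"
  have y: "y \<in> X" "\<sigma> y = x" using x onto by (auto simp: y_def inv_into_into f_inv_into_f)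
  have "\<sigma> (zshift g y) = zshift g x" using ca y unfolding cellular_automaton_def by blast
  then have "inv_into X \<sigma> (zshift g x) = zshift g y"
    by (rule inv_into_f_eq[OF inj zshift_in_X[OF y(1)]])
  then show "(\<lambda>x\<in>X. inv_into X \<sigma> x) (zshift g x) = zshift g ((\<lambda>x\<in>X. inv_into X \<sigma> x) x)"
    using x zshift_in_X y_def by simp
qed simp

lemma group_Aut: "group (Aut A X)"
proof (rule groupI)
  fix \<sigma> \<tau> assume "\<sigma> \<in> carrier (Aut A X)" "\<tau> \<in> carrier (Aut A X)"
  moreover from this have "bij_betw (\<sigma> \<circ> \<tau>) X X"
    using bij_betw_trans by (auto simp: Aut_carrier)
  then have "bij_betw (\<lambda>x\<in>X. \<sigma> (\<tau> x)) X X"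
    by (simp add: comp_def)
  ultimately show "\<sigma> \<otimes>\<^bsub>Aut A X\<^esub> \<tau> \<in> carrier (Aut A X)"
    using cellular_automaton_compose by (auto simp: Aut_def)
next
  show "\<one>\<^bsub>Aut A X\<^esub> \<in> carrier (Aut A X)"
    using cellular_automaton_identity by (simp add: Aut_def bij_betw_def inj_on_def)
next
  fix \<rho> \<sigma> \<tau> assume "\<tau> \<in> carrier (Aut A X)"
  then show "\<rho> \<otimes>\<^bsub>Aut A X\<^esub> \<sigma> \<otimes>\<^bsub>Aut A X\<^esub> \<tau> = \<rho> \<otimes>\<^bsub>Aut A X\<^esub> (\<sigma> \<otimes>\<^bsub>Aut A X\<^esub> \<tau>)"
    using cellular_automaton_in_X by (auto simp: Aut_def)
next
  fix \<sigma> assume "\<sigma> \<in> carrier (Aut A X)"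
  then show "\<one>\<^bsub>Aut A X\<^esub> \<otimes>\<^bsub>Aut A X\<^esub> \<sigma> = \<sigma>"
    using cellular_automaton_in_X
    by (auto simp: Aut_def cellular_automaton_def extensional_def fun_eq_iff)
next
  fix \<sigma> assume \<sigma>: "\<sigma> \<in> carrier (Aut A X)"
  then have ca: "cellular_automaton A X \<sigma>" and bij: "bij_betw \<sigma> X X" by (auto simp: Aut_def)
  have "bij_betw (\<lambda>x\<in>X. inv_into X \<sigma> x) X X"
    using bij_betw_inv_into[OF bij]
    by simp
  then have "(\<lambda>x\<in>X. inv_into X \<sigma> x) \<in> carrier (Aut A X)"
    using cellular_automaton_inverse[OF ca bij] by (simp add: Aut_def)
  moreover have "(\<lambda>x\<in>X. inv_into X \<sigma> x) \<otimes>\<^bsub>Aut A X\<^esub> \<sigma> = \<one>\<^bsub>Aut A X\<^esub>"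
    using bij cellular_automaton_in_X[OF ca]
    by (auto simp: Aut_def bij_betw_def intro!: restrict_ext)
  ultimately show "\<exists>\<rho>\<in>carrier (Aut A X). \<rho> \<otimes>\<^bsub>Aut A X\<^esub> \<sigma> = \<one>\<^bsub>Aut A X\<^esub>" by blast
qed

sublocale Aut: group "Aut A X"
  by (rule group_Aut)

lemma Aut_inv_apply_left: "\<sigma> \<in> carrier (Aut A X) \<Longrightarrow> z \<in> X \<Longrightarrow> (inv\<^bsub>Aut A X\<^esub> \<sigma>) (\<sigma> z) = z"
  using Aut.l_inv Aut_mult_apply Aut_one_apply by metis

lemma Aut_inv_apply_right: "\<sigma> \<in> carrier (Aut A X) \<Longrightarrow> z \<in> X \<Longrightarrow> \<sigma> ((inv\<^bsub>Aut A X\<^esub> \<sigma>) z) = z"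
  using Aut.r_inv Aut_mult_apply Aut_one_apply by metis

lemma subgroup_pointwise_stabilizer:
  assumes "P \<subseteq> X"
  shows "subgroup {\<tau> \<in> carrier (Aut A X). \<forall>z\<in>P. \<tau> z = z} (Aut A X)"
proof (rule Aut.subgroupI)
  show "{\<tau> \<in> carrier (Aut A X). \<forall>z\<in>P. \<tau> z = z} \<noteq> {}"
    using assms Aut.one_closed Aut_one_apply by blast
  show "inv\<^bsub>Aut A X\<^esub> \<sigma> \<in> {\<tau> \<in> carrier (Aut A X). \<forall>z\<in>P. \<tau> z = z}"
    if "\<sigma> \<in> {\<tau> \<in> carrier (Aut A X). \<forall>z\<in>P. \<tau> z = z}" for \<sigma>
    using that assms Aut_inv_apply_left Aut.inv_closed by force
  show "\<sigma> \<otimes>\<^bsub>Aut A X\<^esub> \<tau> \<in> {\<tau> \<in> carrier (Aut A X). \<forall>z\<in>P. \<tau> z = z}"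
    if "\<sigma> \<in> {\<tau> \<in> carrier (Aut A X). \<forall>z\<in>P. \<tau> z = z}" "\<tau> \<in> {\<tau> \<in> carrier (Aut A X). \<forall>z\<in>P. \<tau> z = z}"
    for \<sigma> \<tau>
    using that assms Aut_mult_apply Aut.m_closed by auto
qed auto

end

lemma (in group) finite_rcosets_if_factors_through_finite:
  assumes "subgroup H G" "finite (f ` carrier G)"
    and "\<And>a b. a \<in> carrier G \<Longrightarrow> b \<in> carrier G \<Longrightarrow> f a = f b \<Longrightarrow> b \<otimes> inv a \<in> H"
  shows "finite (rcosets H)"
proof -
  have coset_eq: "H #> a = H #> b" if "a \<in> carrier G" "b \<in> carrier G" "f a = f b" for a b
  proof -
    have "b = (b \<otimes> inv a) \<otimes> a" using that(1,2) by (simp add: m_assoc)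
    then have "b \<in> H #> a" using assms(3)[OF that] unfolding r_coset_def by blast
    then show ?thesis using repr_independence[OF _ that(1) assms(1)] by blast
  qed
  define rep where "rep v = (SOME a. a \<in> carrier G \<and> f a = v)" for v
  have "H #> a = H #> rep (f a)" if "a \<in> carrier G" for a
    using someI[of "\<lambda>b. b \<in> carrier G \<and> f b = f a" a] that coset_eq unfolding rep_def by metis
  then have "rcosets H \<subseteq> (\<lambda>v. H #> rep v) ` f ` carrier G"
    unfolding RCOSETS_def by blast
  then show ?thesis using assms(2) finite_subset by blast
qed

context finite_subshift
begin

lemma finite_rcosets_pointwise_stabilizer:
  assumes "finite P" "P \<subseteq> X" and invariant: "\<And>\<sigma> z. \<sigma> \<in> carrier (Aut A X) \<Longrightarrow> z \<in> P \<Longrightarrow> \<sigma> z \<in> P"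
  shows "finite (rcosets\<^bsub>Aut A X\<^esub> {\<tau> \<in> carrier (Aut A X). \<forall>z\<in>P. \<tau> z = z})"
proof (rule Aut.finite_rcosets_if_factors_through_finite[OF
      subgroup_pointwise_stabilizer[OF assms(2)]])
  show "finite ((\<lambda>\<tau>. restrict \<tau> P) ` carrier (Aut A X))"
    by (rule finite_subset[OF _ finite_PiE[of P "\<lambda>_. P"]]) (use invariant assms(1) in auto)
  fix \<sigma> \<tau> assume \<sigma>: "\<sigma> \<in> carrier (Aut A X)" and \<tau>: "\<tau> \<in> carrier (Aut A X)"
    and "restrict \<sigma> P = restrict \<tau> P"
  then have "\<sigma> z = \<tau> z" if "z \<in> P" for z using that by (metis restrict_apply')
  then have "\<tau> ((inv\<^bsub>Aut A X\<^esub> \<sigma>) z) = z" if "z \<in> P" for z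
    using that \<sigma> invariant[OF Aut.inv_closed[OF \<sigma>]] Aut_inv_apply_right assms(2) by force
  then show "\<tau> \<otimes>\<^bsub>Aut A X\<^esub> inv\<^bsub>Aut A X\<^esub> \<sigma> \<in> {\<tau> \<in> carrier (Aut A X). \<forall>z\<in>P. \<tau> z = z}"
    using \<sigma> \<tau> assms(2) Aut_mult_apply Aut.m_closed Aut.inv_closed
    by auto
qed

lemma Aut_moves_periodic_point:
  assumes "periodic_points_dense X" "\<sigma> \<in> carrier (Aut A X)" "\<sigma> \<noteq> \<one>\<^bsub>Aut A X\<^esub>"
  obtains q y where "q > 0" "y \<in> periodic_points X q" "\<sigma> y \<noteq> y"
proof -
  have ca: "cellular_automaton A X \<sigma>" using assms(2) by (simp add: Aut_carrier)
  have "\<exists>x\<in>X. \<sigma> x \<noteq> x"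
  proof (rule ccontr)
    assume "\<not> (\<exists>x\<in>X. \<sigma> x \<noteq> x)"
    then have "\<sigma> = \<one>\<^bsub>Aut A X\<^esub>"
      using ca by (intro ext) (auto simp: Aut_def cellular_automaton_def extensional_def)
    then show False using assms(3) by blast
  qed
  then obtain x where x: "x \<in> X" "\<sigma> x \<noteq> x" by blast
  then obtain j where j: "\<sigma> x j \<noteq> x j" by blast
  obtain n where n: "\<And>z. z \<in> X \<Longrightarrow> agree_on_window n z x \<Longrightarrow> \<sigma> z j = \<sigma> x j"
    using cellular_automaton_window[OF ca x(1)] by blast
  obtain q y where y: "q > 0" "y \<in> periodic_points X q" "agree_on_window (max n (nat \<bar>j\<bar>)) y x"
    using assms(1) x(1) unfolding periodic_points_dense_def by blast
  have "\<sigma> y j = \<sigma> x j" "y j = x j"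
    using n[of y] y periodic_points_subset by (auto simp: agree_on_window_def)
  then show ?thesis using that y(1,2) j by metis
qed

theorem residually_finite_Aut_if_periodic_points_dense:
  assumes "periodic_points_dense X"
  shows "residually_finite (Aut A X)"
  unfolding residually_finite_def
proof (intro ballI impI)
  fix \<sigma> assume "\<sigma> \<in> carrier (Aut A X)" "\<sigma> \<noteq> \<one>\<^bsub>Aut A X\<^esub>"
  then obtain q y where q: "q > 0" "y \<in> periodic_points X q" "\<sigma> y \<noteq> y"
    using Aut_moves_periodic_point[OF assms] by blast
  let ?H = "{\<tau> \<in> carrier (Aut A X). \<forall>z\<in>periodic_points X q. \<tau> z = z}"
  have "subgroup ?H (Aut A X)" "finite (rcosets\<^bsub>Aut A X\<^esub> ?H)"
    using subgroup_pointwise_stabilizer finite_rcosets_pointwise_stabilizer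
      finite_periodic_points[OF q(1)] periodic_points_subset cellular_automaton_periodic_points
    by (auto simp: Aut_carrier)
  moreover have "\<sigma> \<notin> ?H" using q by blast
  ultimately show "\<exists>H. subgroup H (Aut A X) \<and> finite (rcosets\<^bsub>Aut A X\<^esub> H) \<and> \<sigma> \<notin> H" by blast
qed

subsection \<open>An invariant measure\<close>

lemma open_sets_subset_Pow: "{U. openin XT U} \<subseteq> Pow X"
  using openin_subset topspace_XT by blast

lemma sigma_algebra_borel_sets_of: "sigma_algebra X (borel_sets_of A X)"
  unfolding borel_sets_of_def by (rule sigma_algebra_sigma_sets[OF open_sets_subset_Pow])

lemma openin_in_borel_sets_of: "openin XT U \<Longrightarrow> U \<in> borel_sets_of A X"
  unfolding borel_sets_of_def by blast

lemma zshift_vimage_borel_sets_of: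
  assumes "T \<in> borel_sets_of A X"
  shows "zshift g -` T \<inter> X \<in> borel_sets_of A X"
proof -
  have "openin XT (zshift g -` U \<inter> X)" if "openin XT U" for U
  proof -
    have preimage: "{x \<in> topspace XT. zshift g x \<in> U} = zshift g -` U \<inter> X"
      unfolding topspace_XT by auto
    show ?thesis
      using openin_continuous_map_preimage[OF continuous_map_zshift_XT[of g] that] unfolding preimage .
  qed
  then have open_preimages: "{zshift g -` U \<inter> X |U. U \<in> {U. openin XT U}} \<subseteq> {U. openin XT U}"
    by auto
  have "zshift g -` T \<inter> X \<in> {zshift g -` U \<inter> X |U. U \<in> sigma_sets X {U. openin XT U}}"
    using assms unfolding borel_sets_of_def by blast
  also have "\<dots> = sigma_sets X {zshift g -` U \<inter> X |U. U \<in> {U. openin XT U}}"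
    using zshift_in_X by (intro sigma_sets_vimage_commute) blast
  also have "\<dots> \<subseteq> borel_sets_of A X"
    unfolding borel_sets_of_def using open_preimages by (rule sigma_sets_subseteq)
  finally show ?thesis .
qed

text \<open>Mixing over all periods \<open>k q\<^sub>0\<close> puts every periodic point in the support.\<close>
lemma shift_invariant_pmf_on_periodic_points:
  assumes "q0 > 0" "periodic_points X q0 \<noteq> {}"
  obtains p where "set_pmf p = (\<Union>q\<in>{0<..}. periodic_points X q)" "\<And>g. map_pmf (zshift g) p = p"
proof -
  define Q where "Q k = periodic_points X (int (Suc k) * q0)" for k
  have finite_Q: "finite (Q k)" for k
    unfolding Q_def using assms(1) by (intro finite_periodic_points) simp
  have nonempty_Q: "Q k \<noteq> {}" for k
    using assms(2) zshift_multiple_periodic unfolding Q_def periodic_points_def by blast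
  define p where "p = bind_pmf (geometric_pmf (1/2)) (\<lambda>k. pmf_of_set (Q k))"
  show ?thesis
  proof (rule that)
    have "(\<Union>k. Q k) = (\<Union>q\<in>{0<..}. periodic_points X q)"
    proof (intro equalityI subsetI)
      fix y assume "y \<in> (\<Union>q\<in>{0<..}. periodic_points X q)"
      then obtain q where "q > 0" "y \<in> periodic_points X q" by auto
      moreover have "int (Suc (nat q - 1)) * q0 = q0 * q" if "q > 0" using that by simp
      ultimately have "y \<in> Q (nat q - 1)"
        using zshift_multiple_periodic[of q y q0] by (simp add: Q_def periodic_points_def mult.commute)
      then show "y \<in> (\<Union>k. Q k)" by blast
    qed (use assms(1) Q_def in auto)
    then show "set_pmf p = (\<Union>q\<in>{0<..}. periodic_points X q)"
      unfolding p_def using finite_Q nonempty_Q by (simp add: set_pmf_geometric)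
    fix g
    have "map_pmf (zshift g) (pmf_of_set (Q k)) = pmf_of_set (Q k)" for k
      using map_pmf_of_set_inj[OF inj_on_subset[OF inj_zshift] nonempty_Q finite_Q]
      by (simp add: Q_def zshift_periodic_points)
    then show "map_pmf (zshift g) p = p" unfolding p_def map_bind_pmf by simp
  qed
qed

end

lemma measure_of_pmf:
  assumes "sigma_algebra \<Omega> \<Sigma>" "set_pmf p \<subseteq> \<Omega>"
  shows "prob_space (measure_of \<Omega> \<Sigma> (measure_pmf p))"
    and "space (measure_of \<Omega> \<Sigma> (measure_pmf p)) = \<Omega>"
    and "sets (measure_of \<Omega> \<Sigma> (measure_pmf p)) = \<Sigma>"
    and "\<And>T. T \<in> \<Sigma> \<Longrightarrow> measure (measure_of \<Omega> \<Sigma> (measure_pmf p)) T = measure_pmf.prob p T"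
proof -
  have emeasure_eq: "emeasure (measure_of \<Omega> \<Sigma> (measure_pmf p)) T = emeasure (measure_pmf p) T"
    if "T \<in> \<Sigma>" for T
    using emeasure_countably_additive[of "measure_pmf p"] assms(1) that
    by (intro emeasure_measure_of_sigma) (auto simp: positive_def countably_additive_def)
  show space: "space (measure_of \<Omega> \<Sigma> (measure_pmf p)) = \<Omega>"
    using assms(1) by (simp add: sigma_algebra.space_measure_of_eq)
  show "sets (measure_of \<Omega> \<Sigma> (measure_pmf p)) = \<Sigma>"
    using assms(1) by (simp add: sigma_algebra.sets_measure_of_eq)
  show "measure (measure_of \<Omega> \<Sigma> (measure_pmf p)) T = measure_pmf.prob p T" if "T \<in> \<Sigma>" for T
    using emeasure_eq[OF that] by (simp add: measure_def)
  have "emeasure (measure_pmf p) \<Omega> = emeasure (measure_pmf p) UNIV"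
    using emeasure_Int_set_pmf[of p \<Omega>] emeasure_Int_set_pmf[of p UNIV] assms(2)
    by (metis Int_absorb1 inf_top_left)
  then show "prob_space (measure_of \<Omega> \<Sigma> (measure_pmf p))"
    using emeasure_eq[OF algebra.top[OF sigma_algebra.axioms(1)[OF assms(1)]]] measure_pmf.emeasure_space_1[of p]
    by (intro prob_spaceI) (simp add: space)
qed

context finite_subshift
begin

theorem invariant_measure_if_periodic_points_dense:
  assumes "periodic_points_dense X" "X \<noteq> {}"
  shows "\<exists>M. prob_space M \<and> space M = X \<and> sets M = borel_sets_of A X \<and>
           (\<forall>g. \<forall>S\<in>sets M. measure M (zshift g -` S \<inter> X) = measure M S) \<and>
           (\<forall>U. openin XT U \<longrightarrow> U \<noteq> {} \<longrightarrow> measure M U > 0)"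
proof -
  obtain q0 where "q0 > 0" "periodic_points X q0 \<noteq> {}"
    using assms unfolding periodic_points_dense_def by blast
  then obtain p where p: "set_pmf p = (\<Union>q\<in>{0<..}. periodic_points X q)"
      "\<And>g. map_pmf (zshift g) p = p"
    using shift_invariant_pmf_on_periodic_points by blast
  have support: "set_pmf p \<subseteq> X" using p(1) periodic_points_subset by blast
  note M = measure_of_pmf[OF sigma_algebra_borel_sets_of support]
  let ?M = "measure_of X (borel_sets_of A X) (measure_pmf p)"
  have "measure ?M (zshift g -` T \<inter> X) = measure ?M T" if "T \<in> borel_sets_of A X" for g T
  proof -
    have "measure_pmf.prob p (zshift g -` T \<inter> X) = measure_pmf.prob p (zshift g -` T)"
      using measure_Int_set_pmf[of p "zshift g -` T \<inter> X"] measure_Int_set_pmf[of p "zshift g -` T"]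
        support by (metis Int_assoc inf.absorb_iff2)
    also have "\<dots> = measure_pmf.prob (map_pmf (zshift g) p) T" by simp
    finally show ?thesis using M(4) that zshift_vimage_borel_sets_of p(2) by simp
  qed
  moreover have "measure ?M U > 0" if U: "openin XT U" "U \<noteq> {}" for U
  proof -
    obtain x V where x: "x \<in> U" and V: "openin (fullshift_top A) V" "U = V \<inter> X"
      using U unfolding openin_subtopology by blast
    then obtain n where n: "\<And>z. z \<in> topspace (fullshift_top A) \<Longrightarrow> agree_on_window n z x \<Longrightarrow> z \<in> V"
      using openin_fullshift_top_window by blast
    obtain q y where "q > 0" "y \<in> periodic_points X q" "agree_on_window n y x"
      using assms(1) x V(2) unfolding periodic_points_dense_def by blast
    then have "y \<in> set_pmf p" "y \<in> U"
      using p(1) n V(2) periodic_points_subset X_subset_topspace by blast+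
    then show ?thesis using measure_pmf_posI M(4) openin_in_borel_sets_of[OF U(1)] by simp
  qed
  ultimately show ?thesis using M(1-3) by (intro exI[of _ ?M]) auto
qed

end

section \<open>Specification and strong irreducibility\<close>

locale specification_subshift = finite_subshift +
  fixes N :: nat
  assumes nonempty: "X \<noteq> {}"
    and gluing: "\<And>u v. in_language X u \<Longrightarrow> in_language X v \<Longrightarrow> \<exists>g. length g = N \<and> in_language X (u @ g @ v)"
begin

lemma in_language_Nil: "in_language X []"
  using nonempty by (auto simp: in_language_def occurs_at_def)

lemma synchronizing_word_exists:
  obtains m where "in_language X m"
    and "\<And>x y. in_language X (x @ m) \<Longrightarrow> in_language X (m @ y) \<Longrightarrow> in_language X (x @ m @ y)"
proof -
  define gaps where "gaps a b = {g. length g = N \<and> in_language X (a @ g @ b)}" for a b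
  have finite_gaps: "finite (gaps a b)" for a b
  proof -
    have "gaps a b \<subseteq> {g. set g \<subseteq> A \<and> length g = N}"
      unfolding gaps_def using in_language_set by fastforce
    then show ?thesis using finite_lists_length_eq[OF finite_alphabet] finite_subset by blast
  qed
  define P where "P c \<longleftrightarrow> (\<exists>a b. in_language X a \<and> in_language X b \<and> card (gaps a b) = c)" for c
  obtain a b where ab: "in_language X a" "in_language X b" "card (gaps a b) = (LEAST c. P c)"
    using LeastI[of P "card (gaps [] [])"] in_language_Nil unfolding P_def by blast
  txt \<open>By minimality, extending \<open>a\<close> to the left and \<open>b\<close> to the right loses no gap.\<close>
  have minimal: "gaps (x @ a) (b @ y) = gaps a b"
    if "in_language X (x @ a)" "in_language X (b @ y)" for x y
  proof (rule card_seteq[OF finite_gaps])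
    show "gaps (x @ a) (b @ y) \<subseteq> gaps a b"
      unfolding gaps_def using in_language_infix[of x "a @ _ @ b" y] by auto
    show "card (gaps a b) \<le> card (gaps (x @ a) (b @ y))"
      unfolding ab(3) using that by (intro Least_le) (auto simp: P_def)
  qed
  obtain g where g: "g \<in> gaps a b" using gluing[OF ab(1,2)] unfolding gaps_def by blast
  show ?thesis
  proof (rule that[of "a @ g @ b"])
    show "in_language X (a @ g @ b)" using g by (simp add: gaps_def)
    fix x y assume "in_language X (x @ a @ g @ b)" "in_language X ((a @ g @ b) @ y)"
    then have "in_language X (x @ a)" "in_language X (b @ y)"
      using in_language_prefix[of "x @ a"] in_language_suffix[of "a @ g"] by auto
    then show "in_language X (x @ (a @ g @ b) @ y)"
      using minimal g by (fastforce simp: gaps_def)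
  qed
qed

lemma periodic_word_exists:
  assumes "in_language X u"
  obtains p s where "\<And>k. in_language X (concat (replicate k (p @ u @ s)))"
proof -
  obtain m where m: "in_language X m"
    "\<And>x y. in_language X (x @ m) \<Longrightarrow> in_language X (m @ y) \<Longrightarrow> in_language X (x @ m @ y)"
    using synchronizing_word_exists by blast
  obtain h1 where h1: "in_language X (m @ h1 @ u)" using gluing[OF m(1) assms] by blast
  obtain h2 where h2: "in_language X ((m @ h1 @ u) @ h2 @ m)" using gluing[OF h1 m(1)] by blast
  define B where "B = m @ h1 @ u @ h2"
  have "in_language X (concat (replicate k B) @ m)" for k
  proof (induction k)
    case (Suc k)
    have "in_language X (m @ h1 @ u @ h2 @ m)" using h2 by simp
    from m(2)[OF Suc this] show ?case
      by (simp add: replicate_append_same[symmetric] B_def)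
  qed (simp add: m(1))
  then show ?thesis
    using that[of "m @ h1" h2] in_language_prefix unfolding B_def by (metis append.assoc)
qed

theorem periodic_points_dense: "periodic_points_dense X"
  unfolding periodic_points_dense_def
proof (intro ballI allI)
  fix x n assume x: "x \<in> X"
  define u where "u = map (\<lambda>i. x (- int n + int i)) [0..<2 * n + 1]"
  have occurs_x: "occurs_at x (- int n) u" unfolding occurs_at_def u_def by (simp del: upt_Suc)
  obtain p s where powers: "\<And>k. in_language X (concat (replicate k (p @ u @ s)))"
    using periodic_word_exists in_language_if_occurs[OF x occurs_x] by blast
  define B where "B = p @ u @ s"
  have "B \<noteq> []" by (simp add: B_def u_def)
  define y where "y = zshift (- int n - int (length p)) (cyclic_config B)"
  have y_periodic: "y \<in> periodic_points X (int (length B))"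
    using cyclic_config_in_X[OF \<open>B \<noteq> []\<close> powers[folded B_def]] zshift_cyclic_config[of B]
      zshift_in_X zshift_periodic by (simp add: y_def periodic_points_def)
  have "occurs_at (cyclic_config B) 0 (p @ u @ s)"
    using occurs_at_cyclic_config[OF \<open>B \<noteq> []\<close>, of 0 1] by (simp add: B_def)
  then have "occurs_at (cyclic_config B) (int (length p)) u"
    by (simp add: occurs_at_append)
  then have "occurs_at y (- int n) u"
    using occurs_at_zshift[of "cyclic_config B" "int (length p)" u "- int n - int (length p)"]
    by (simp add: y_def)
  then have "agree_on_window n y x"
    using occurs_x unfolding agree_on_window_def
    by (intro allI impI occurs_at_agree) (auto simp: u_def)
  then show "\<exists>q>0. \<exists>y\<in>periodic_points X q. agree_on_window n y x"
    using y_periodic \<open>B \<noteq> []\<close> by (intro exI[of _ "int (length B)"]) auto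
qed

end

lemma strongly_irreducible_separated:
  assumes "strongly_irreducible X"
  obtains K :: nat where "\<And>\<Omega>1 \<Omega>2 x1 x2. finite \<Omega>1 \<Longrightarrow> finite \<Omega>2 \<Longrightarrow>
      (\<forall>a\<in>\<Omega>1. \<forall>b\<in>\<Omega>2. int K \<le> \<bar>b - a\<bar>) \<Longrightarrow> x1 \<in> X \<Longrightarrow> x2 \<in> X \<Longrightarrow>
      \<exists>x\<in>X. (\<forall>h\<in>\<Omega>1. x h = x1 h) \<and> (\<forall>h\<in>\<Omega>2. x h = x2 h)"
proof -
  obtain \<Delta> :: "int set" where \<Delta>: "finite \<Delta>" and glue: "\<forall>\<Omega>1 \<Omega>2. finite \<Omega>1 \<longrightarrow> finite \<Omega>2 \<longrightarrow>
      {a - d |a d. a \<in> \<Omega>1 \<and> d \<in> \<Delta>} \<inter> \<Omega>2 = {} \<longrightarrow>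
      (\<forall>x1\<in>X. \<forall>x2\<in>X. \<exists>x\<in>X. (\<forall>h\<in>\<Omega>1. x h = x1 h) \<and> (\<forall>h\<in>\<Omega>2. x h = x2 h))"
    using assms unfolding strongly_irreducible_def by (elim exE conjE)
  define K where "K = Suc (Max (insert 0 ((\<lambda>d. nat \<bar>d\<bar>) ` \<Delta>)))"
  have "\<bar>d\<bar> < int K" if "d \<in> \<Delta>" for d
  proof -
    have "nat \<bar>d\<bar> \<le> Max (insert 0 ((\<lambda>d. nat \<bar>d\<bar>) ` \<Delta>))" using \<Delta> that by (intro Max_ge) auto
    then show ?thesis unfolding K_def by linarith
  qed
  then have disjoint: "{a - d |a d. a \<in> \<Omega>1 \<and> d \<in> \<Delta>} \<inter> \<Omega>2 = {}"
    if "\<forall>a\<in>\<Omega>1. \<forall>b\<in>\<Omega>2. int K \<le> \<bar>b - a\<bar>" for \<Omega>1 \<Omega>2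
    using that by fastforce
  show ?thesis
    by (rule that) (use glue[rule_format, OF _ _ disjoint] in blast)
qed

lemma (in finite_subshift) strongly_irreducible_gluing:
  assumes "strongly_irreducible X"
  obtains N where "\<And>u v. in_language X u \<Longrightarrow> in_language X v \<Longrightarrow>
      \<exists>g. length g = N \<and> in_language X (u @ g @ v)"
proof -
  obtain K where K: "\<And>\<Omega>1 \<Omega>2 x1 x2. finite \<Omega>1 \<Longrightarrow> finite \<Omega>2 \<Longrightarrow>
      (\<forall>a\<in>\<Omega>1. \<forall>b\<in>\<Omega>2. int K \<le> \<bar>b - a\<bar>) \<Longrightarrow> x1 \<in> X \<Longrightarrow> x2 \<in> X \<Longrightarrow>
      \<exists>x\<in>X. (\<forall>h\<in>\<Omega>1. x h = x1 h) \<and> (\<forall>h\<in>\<Omega>2. x h = x2 h)"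
    using strongly_irreducible_separated[OF assms] by blast
  have "\<exists>g. length g = K \<and> in_language X (u @ g @ v)"
    if u: "in_language X u" and v: "in_language X v" for u v
  proof -
    define c where "c = int (length u) + int K"
    obtain x1 where x1: "x1 \<in> X" "occurs_at x1 0 u"
      using u unfolding in_language_def by blast
    obtain y where "y \<in> X" "occurs_at y 0 v"
      using v unfolding in_language_def by blast
    then have x2: "zshift c y \<in> X" "occurs_at (zshift c y) c v"
      using zshift_in_X occurs_at_zshift[of y 0 v c] by auto
    have "\<forall>a\<in>{0..<int (length u)}. \<forall>b\<in>{c..<c + int (length v)}. int K \<le> \<bar>b - a\<bar>"
      by (auto simp: c_def)
    then obtain x where x: "x \<in> X" "\<forall>h\<in>{0..<int (length u)}. x h = x1 h"
        "\<forall>h\<in>{c..<c + int (length v)}. x h = zshift c y h"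
      using K[OF finite_atLeastLessThan_int finite_atLeastLessThan_int _ x1(1) x2(1)] by blast
    define g where "g = map (\<lambda>i. x (int (length u) + int i)) [0..<K]"
    have "occurs_at x 0 u" "occurs_at x c v" "occurs_at x (int (length u)) g"
      using x1(2) x2(2) x(2,3) by (auto simp: occurs_at_def g_def)
    then have "occurs_at x 0 (u @ g @ v)"
      by (simp add: occurs_at_append g_def c_def)
    moreover have "length g = K" by (simp add: g_def)
    ultimately show ?thesis using x(1) unfolding in_language_def by blast
  qed
  then show ?thesis using that by blast
qed

theorem corollary1p4:
  fixes A :: "'a set" and X :: "(int \<Rightarrow> 'a) set"
  assumes "finite A"
    and "subshift A X"
    and "X \<noteq> {}"
    and "strongly_irreducible X"
  shows "surjunctive A X \<and> residually_finite (Aut A X) \<and>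
         (\<exists>M. prob_space M \<and> space M = X \<and> sets M = borel_sets_of A X \<and>
              (\<forall>g. \<forall>S\<in>sets M. measure M ((zshift g -` S) \<inter> X) = measure M S) \<and>
              (\<forall>U. openin (subtopology (fullshift_top A) X) U \<longrightarrow> U \<noteq> {} \<longrightarrow> measure M U > 0))"
proof -
  interpret finite_subshift A X using assms(1,2) by unfold_locales
  obtain N where "\<And>u v. in_language X u \<Longrightarrow> in_language X v \<Longrightarrow>
      \<exists>g. length g = N \<and> in_language X (u @ g @ v)"
    using strongly_irreducible_gluing[OF assms(4)] by blast
  then interpret specification_subshift A X N using assms(3) by unfold_locales
  show ?thesis
    using surjunctive_if_periodic_points_dense residually_finite_Aut_if_periodic_points_dense
      invariant_measure_if_periodic_points_dense periodic_points_dense assms(3)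
    by blast
qed

end
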